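(* Let $\psi\in\mathbb{R}[x]$ have a zero of multiplicity $2$ at $0$, and let $\psi=\psi_2+\dots+\psi_t$ be its expansion into homogeneous polynomials $\psi_j$ of degree $j$, with $\psi_2\neq 0$ and $\psi_t\ne 0$. If the Fischer operator $F_\psi:\mathbb{R}[x]\to\mathbb{R}[x]$ is surjective, then the Fischer operator $F_{\psi_2}:\mathbb{R}[x]\to\mathbb{R}[x]$ is bijective. Moreover, $F_\psi$ is bijective.
   Context: $\mathbb{R}[x]$ denotes the real polynomials in $d$ variables, $\Delta$ the Laplacian, and for a polynomial $\varphi$ the Fischer operator is $F_\varphi(q)=\Delta(\varphi q)$ for $q\in\mathbb{R}[x]$. A polynomial is homogeneous of degree $j$ if $f(rx)=r^jf(x)$ for all $r>0$, $x\in\mathbb{R}^d$. The multiplicity of a zero $x_0$ of $\psi$ is the largest $N$ such that all partial derivatives $\partial^\alpha\psi(x_0)$ with $|\alpha|\le N-1$ vanish. *)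

theory Defs
  imports "HOL-Analysis.Analysis" "HOL-Library.Poly_Mapping"
begin

text \<open>Real polynomials in d variables, d = CARD('n), variables indexed by the finite type 'n.\<close>
type_synonym 'n rpoly = "('n \<Rightarrow>\<^sub>0 nat) \<Rightarrow>\<^sub>0 real"

definition peval :: "'n::finite rpoly \<Rightarrow> ('n \<Rightarrow> real) \<Rightarrow> real" where
  "peval p x = (\<Sum>a\<in>Poly_Mapping.keys p. Poly_Mapping.lookup p a * (\<Prod>i\<in>UNIV. x i ^ Poly_Mapping.lookup (a::'n \<Rightarrow>\<^sub>0 nat) i))"

definition pdiff :: "'n \<Rightarrow> 'n rpoly \<Rightarrow> 'n rpoly" where
  "pdiff i p = (\<Sum>a\<in>Poly_Mapping.keys p.
      Poly_Mapping.single (a - Poly_Mapping.single i 1) (Poly_Mapping.lookup p a * of_nat (Poly_Mapping.lookup (a::'n \<Rightarrow>\<^sub>0 nat) i)))"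

definition pdiffs :: "'n list \<Rightarrow> 'n rpoly \<Rightarrow> 'n rpoly" where
  "pdiffs is p = foldr pdiff is p"

definition laplacian :: "'n::finite rpoly \<Rightarrow> 'n rpoly" where
  "laplacian p = (\<Sum>i\<in>UNIV. pdiff i (pdiff i p))"

definition fischer :: "'n::finite rpoly \<Rightarrow> 'n rpoly \<Rightarrow> 'n rpoly" where
  "fischer \<phi> q = laplacian (\<phi> * q)"

definition homogeneous :: "'n::finite rpoly \<Rightarrow> nat \<Rightarrow> bool" where
  "homogeneous f j \<longleftrightarrow> (\<forall>r>0. \<forall>x. peval f (\<lambda>i. r * x i) = r ^ j * peval f x)"

definition derivs_vanish :: "'n::finite rpoly \<Rightarrow> ('n \<Rightarrow> real) \<Rightarrow> nat \<Rightarrow> bool" where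
  "derivs_vanish \<psi> x0 N \<longleftrightarrow> (\<forall>is. length is < N \<longrightarrow> peval (pdiffs is \<psi>) x0 = 0)"

definition zero_multiplicity :: "'n::finite rpoly \<Rightarrow> ('n \<Rightarrow> real) \<Rightarrow> nat \<Rightarrow> bool" where
  "zero_multiplicity \<psi> x0 N \<longleftrightarrow> derivs_vanish \<psi> x0 N \<and> \<not> derivs_vanish \<psi> x0 (Suc N)"

end

theory Submission
  imports Defs
begin

text \<open>Grade the polynomials by total degree and let \<open>P\<^sub>k\<close> be the finite-dimensional space of
  polynomials homogeneous of degree \<open>k\<close>. The Laplacian lowers degrees by two, so \<open>F\<^bsub>\<psi>\<^sub>2\<^esub>\<close> maps
  \<open>P\<^sub>k\<close> into itself, and since \<open>\<psi> - \<psi>\<^sub>2\<close> only has terms of degree \<open>\<ge> 3\<close>, the lowest-degree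
  component of \<open>F\<^sub>\<psi> q\<close> is \<open>F\<^bsub>\<psi>\<^sub>2\<^esub>\<close> applied to the lowest-degree component of \<open>q\<close>.
  By induction on \<open>k\<close>: if \<open>F\<^bsub>\<psi>\<^sub>2\<^esub>\<close> is injective on \<open>P\<^sub>j\<close> for all \<open>j < k\<close>, then every
  \<open>F\<^sub>\<psi>\<close>-preimage of some \<open>f \<in> P\<^sub>k\<close> has no terms of degree \<open>< k\<close>, and its component of degree
  \<open>k\<close> is an \<open>F\<^bsub>\<psi>\<^sub>2\<^esub>\<close>-preimage of \<open>f\<close>. Thus \<open>F\<^bsub>\<psi>\<^sub>2\<^esub>\<close> maps \<open>P\<^sub>k\<close> onto itself, hence
  injectively by finite dimension, so \<open>F\<^bsub>\<psi>\<^sub>2\<^esub>\<close> is bijective. Finally \<open>F\<^sub>\<psi>\<close> is injective,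
  because the lowest component of a nonzero element of its kernel would lie in the kernel of
  \<open>F\<^bsub>\<psi>\<^sub>2\<^esub>\<close>.\<close>

abbreviation lookup where "lookup \<equiv> Poly_Mapping.lookup"
abbreviation keys where "keys \<equiv> Poly_Mapping.keys"

section \<open>Homogeneous components\<close>

definition tdeg :: "('n::finite \<Rightarrow>\<^sub>0 nat) \<Rightarrow> nat" where
  "tdeg a = (\<Sum>i\<in>UNIV. lookup a i)"

lemma tdeg_add: "tdeg (a + b) = tdeg a + tdeg b"
  by (simp add: tdeg_def lookup_add sum.distrib)

lemma tdeg_single: "tdeg (Poly_Mapping.single i (n::nat)) = n"
  by (simp add: tdeg_def lookup_single when_def)

definition restrict_pm :: "(('n \<Rightarrow>\<^sub>0 nat) \<Rightarrow> bool) \<Rightarrow> 'n rpoly \<Rightarrow> 'n rpoly" where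
  "restrict_pm P f = Abs_poly_mapping (\<lambda>a. if P a then lookup f a else 0)"

lemma lookup_restrict_pm: "lookup (restrict_pm P f) a = (if P a then lookup f a else 0)"
proof -
  have "finite {a. (if P a then lookup f a else 0) \<noteq> 0}"
    by (rule finite_subset[of _ "keys f"]) (auto simp: in_keys_iff)
  then show ?thesis unfolding restrict_pm_def by simp
qed

lemma restrict_pm_restrict_pm: "restrict_pm P (restrict_pm Q p) = restrict_pm (\<lambda>a. Q a \<and> P a) p"
  by (rule poly_mapping_eqI) (simp add: lookup_restrict_pm)

lemma restrict_pm_True: "restrict_pm (\<lambda>a. True) p = p"
  by (rule poly_mapping_eqI) (simp add: lookup_restrict_pm)

definition pm_scale :: "real \<Rightarrow> 'n rpoly \<Rightarrow> 'n rpoly" where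
  "pm_scale c p = Poly_Mapping.map ((*) c) p"

lemma lookup_pm_scale: "lookup (pm_scale c p) a = c * lookup p a"
  unfolding pm_scale_def by transfer (simp add: when_def)

lemma pm_scale_eq_mult: "pm_scale c p = Poly_Mapping.single 0 c * p"
  unfolding pm_scale_def by (rule mult_map_scale_conv_mult)

lemma lookup_pdiff:
  "lookup (pdiff i p) b = lookup p (b + Poly_Mapping.single i 1) * of_nat (lookup b i + 1)"
proof -
  let ?e = "Poly_Mapping.single i (1::nat)"
  have shift: "a - ?e = b \<longleftrightarrow> a = b + ?e" if "lookup a i > 0" for a
    using that by (auto simp: poly_mapping_eq_iff fun_eq_iff lookup_minus lookup_add lookup_single when_def)
  have "lookup (pdiff i p) b = (\<Sum>a\<in>keys p. if a - ?e = b then lookup p a * of_nat (lookup a i) else 0)"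
    unfolding pdiff_def lookup_sum by (simp add: lookup_single when_def eq_commute)
  also have "\<dots> = (\<Sum>a\<in>keys p. if a = b + ?e then lookup p a * of_nat (lookup a i) else 0)"
  proof (rule sum.cong[OF refl])
    fix a
    show "(if a - ?e = b then lookup p a * of_nat (lookup a i) else 0) =
          (if a = b + ?e then lookup p a * of_nat (lookup a i) else 0)"
    proof (cases "lookup a i > 0")
      case True
      then show ?thesis using shift[OF True] by simp
    next
      case False
      then have "a \<noteq> b + ?e" by (auto simp: lookup_add)
      with False show ?thesis by simp
    qed
  qed
  also have "\<dots> = lookup p (b + ?e) * of_nat (lookup b i + 1)"
    by (simp add: sum.delta lookup_add in_keys_iff)
  finally show ?thesis .
qed

lemma pdiff_add: "pdiff i (p + q) = pdiff i p + pdiff i q"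
  by (rule poly_mapping_eqI) (simp add: lookup_pdiff lookup_add distrib_right)

lemma pdiff_pm_scale: "pdiff i (pm_scale c p) = pm_scale c (pdiff i p)"
  by (rule poly_mapping_eqI) (simp add: lookup_pdiff lookup_pm_scale)

lemma pdiff_restrict_pm:
  "pdiff i (restrict_pm P p) = restrict_pm (\<lambda>b. P (b + Poly_Mapping.single i 1)) (pdiff i p)"
  by (rule poly_mapping_eqI) (simp add: lookup_pdiff lookup_restrict_pm)

lemma lookup_laplacian: "lookup (laplacian p) b = (\<Sum>i\<in>UNIV. lookup (pdiff i (pdiff i p)) b)"
  by (simp add: laplacian_def lookup_sum)

lemma laplacian_zero: "laplacian 0 = 0"
  by (rule poly_mapping_eqI) (simp add: lookup_laplacian lookup_pdiff)

lemma laplacian_add: "laplacian (p + q) = laplacian p + laplacian q"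
  by (simp add: laplacian_def pdiff_add sum.distrib)

lemma laplacian_pm_scale: "laplacian (pm_scale c p) = pm_scale c (laplacian p)"
  by (rule poly_mapping_eqI) (simp add: lookup_laplacian pdiff_pm_scale lookup_pm_scale sum_distrib_left)

definition hcomp :: "nat \<Rightarrow> 'n::finite rpoly \<Rightarrow> 'n rpoly" where
  "hcomp d p = restrict_pm (\<lambda>a. tdeg a = d) p"

definition is_hom :: "'n::finite rpoly \<Rightarrow> nat \<Rightarrow> bool" where
  "is_hom p d \<longleftrightarrow> (\<forall>a\<in>keys p. tdeg a = d)"

definition ord_ge :: "'n::finite rpoly \<Rightarrow> nat \<Rightarrow> bool" where
  "ord_ge p d \<longleftrightarrow> (\<forall>a\<in>keys p. d \<le> tdeg a)"

definition hom_space :: "nat \<Rightarrow> 'n::finite rpoly set" where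
  "hom_space k = {q. is_hom q k}"

lemma lookup_hcomp: "lookup (hcomp d p) a = (if tdeg a = d then lookup p a else 0)"
  by (simp add: hcomp_def lookup_restrict_pm)

lemma hcomp_laplacian: "hcomp m (laplacian p) = laplacian (hcomp (m + 2) p)"
  by (rule poly_mapping_eqI)
     (simp add: lookup_hcomp lookup_laplacian hcomp_def pdiff_restrict_pm lookup_restrict_pm
       tdeg_add tdeg_single del: One_nat_def)

lemma hcomp_add: "hcomp d (p + q) = hcomp d p + hcomp d q"
  by (rule poly_mapping_eqI) (simp add: lookup_hcomp lookup_add)

lemma hcomp_eq_self: "is_hom p d \<Longrightarrow> hcomp d p = p"
  by (rule poly_mapping_eqI) (auto simp: lookup_hcomp is_hom_def in_keys_iff)

lemma hcomp_eq_zero: "(\<And>a. a \<in> keys p \<Longrightarrow> tdeg a \<noteq> d) \<Longrightarrow> hcomp d p = 0"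
  by (rule poly_mapping_eqI) (auto simp: lookup_hcomp in_keys_iff)

lemma hcomp_zero [simp]: "hcomp d 0 = 0"
  by (rule hcomp_eq_zero) simp

lemma is_hom_hcomp: "is_hom (hcomp d p) d"
  by (auto simp: is_hom_def in_keys_iff lookup_hcomp split: if_splits)

lemma hcomp_in_hom_space: "hcomp d p \<in> hom_space d"
  by (simp add: hom_space_def is_hom_hcomp)

lemma sum_hcomp: "(\<Sum>d\<in>tdeg ` keys p. hcomp d p) = p"
proof (rule poly_mapping_eqI)
  fix a
  have "lookup (\<Sum>d\<in>tdeg ` keys p. hcomp d p) a = (\<Sum>d\<in>tdeg ` keys p. if tdeg a = d then lookup p a else 0)"
    by (simp add: lookup_sum lookup_hcomp)
  also have "\<dots> = lookup p a"
    by (simp add: sum.delta) (metis image_eqI in_keys_iff)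
  finally show "lookup (\<Sum>d\<in>tdeg ` keys p. hcomp d p) a = lookup p a" .
qed

lemma ord_ge_SucI:
  assumes "ord_ge p d" "hcomp d p = 0"
  shows "ord_ge p (Suc d)"
  unfolding ord_ge_def
proof
  fix a assume a: "a \<in> keys p"
  have "lookup (hcomp d p) a = 0" by (simp add: assms(2))
  then have "tdeg a \<noteq> d" using a by (auto simp: lookup_hcomp in_keys_iff split: if_splits)
  then show "Suc d \<le> tdeg a" using assms(1) a by (auto simp: ord_ge_def)
qed

lemma keys_mult_tdeg:
  assumes "a \<in> keys (p * q)"
  obtains b c where "b \<in> keys p" "c \<in> keys q" "tdeg a = tdeg b + tdeg c"
  using keys_mult[of p q] assms by (auto simp: tdeg_add)

lemma is_hom_mult: "is_hom p d \<Longrightarrow> is_hom q e \<Longrightarrow> is_hom (p * q) (d + e)"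
  unfolding is_hom_def by (metis keys_mult_tdeg)

lemma ord_ge_mult: "ord_ge p d \<Longrightarrow> ord_ge q e \<Longrightarrow> ord_ge (p * q) (d + e)"
  unfolding ord_ge_def by (metis add_mono keys_mult_tdeg)

lemma hcomp_mult_is_hom:
  assumes "is_hom p d"
  shows "hcomp (d + m) (p * q) = p * hcomp m q"
proof -
  let ?r = "q - hcomp m q"
  have "tdeg b \<noteq> m" if "b \<in> keys ?r" for b
    using that by (auto simp: in_keys_iff lookup_minus lookup_hcomp)
  then have "hcomp (d + m) (p * ?r) = 0"
    by (intro hcomp_eq_zero) (metis assms is_hom_def keys_mult_tdeg add_left_cancel)
  moreover have "hcomp (d + m) (p * hcomp m q) = p * hcomp m q"
    by (rule hcomp_eq_self, rule is_hom_mult[OF assms is_hom_hcomp])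
  moreover have "q = hcomp m q + ?r" by simp
  ultimately show ?thesis
    by (metis distrib_left hcomp_add add_0_right)
qed

section \<open>The identity theorem\<close>

definition mon :: "('n::finite \<Rightarrow>\<^sub>0 nat) \<Rightarrow> ('n \<Rightarrow> real) \<Rightarrow> real" where
  "mon a x = (\<Prod>i\<in>UNIV. x i ^ lookup a i)"

definition wdeg :: "('n::finite \<Rightarrow> nat) \<Rightarrow> ('n \<Rightarrow>\<^sub>0 nat) \<Rightarrow> nat" where
  "wdeg w a = (\<Sum>i\<in>UNIV. w i * lookup a i)"

lemma wdeg_one: "wdeg (\<lambda>_. 1) = tdeg"
  by (simp add: wdeg_def tdeg_def fun_eq_iff)

lemma peval_superset:
  assumes "finite S" "keys p \<subseteq> S"
  shows "peval p x = (\<Sum>a\<in>S. lookup p a * mon a x)"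
  unfolding peval_def mon_def
  by (rule sum.mono_neutral_left[OF assms]) (auto simp: in_keys_iff)

lemma peval_restrict_pm:
  "peval (restrict_pm P p) x = (\<Sum>a\<in>keys p. if P a then lookup p a * mon a x else 0)"
proof -
  have "keys (restrict_pm P p) \<subseteq> keys p"
    by (auto simp: in_keys_iff lookup_restrict_pm split: if_splits)
  then show ?thesis
    by (subst peval_superset[of "keys p"]) (auto simp: lookup_restrict_pm intro!: sum.cong)
qed

lemma mon_scale: "mon a (\<lambda>i. r ^ w i * x i) = r ^ wdeg w a * mon a x"
  by (simp add: mon_def wdeg_def power_mult_distrib prod.distrib power_mult power_sum)

lemma peval_scale:
  "peval p (\<lambda>i. r ^ w i * x i)
     = (\<Sum>d\<in>wdeg w ` keys p. r ^ d * peval (restrict_pm (\<lambda>a. wdeg w a = d) p) x)"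
proof -
  have "peval p (\<lambda>i. r ^ w i * x i) = (\<Sum>a\<in>keys p. lookup p a * (r ^ wdeg w a * mon a x))"
    by (simp add: peval_def mon_scale[unfolded mon_def] mon_def)
  also have "\<dots> = (\<Sum>a\<in>keys p. \<Sum>d\<in>wdeg w ` keys p.
                     if wdeg w a = d then r ^ d * (lookup p a * mon a x) else 0)"
    by (rule sum.cong[OF refl]) (simp add: sum.delta)
  also have "\<dots> = (\<Sum>d\<in>wdeg w ` keys p. r ^ d * peval (restrict_pm (\<lambda>a. wdeg w a = d) p) x)"
    by (subst sum.swap) (simp add: peval_restrict_pm sum_distrib_left if_distrib cong: if_cong)
  finally show ?thesis .
qed

lemma peval_scale_hcomp:
  "peval p (\<lambda>i. r * x i) = (\<Sum>d\<in>tdeg ` keys p. r ^ d * peval (hcomp d p) x)"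
  using peval_scale[of p r "\<lambda>_. 1" x] unfolding wdeg_one hcomp_def by simp

lemma power_sum_eq_zero_imp_coeff_eq_zero:
  fixes c :: "nat \<Rightarrow> real"
  assumes D: "finite D" and zero: "\<And>r. r > 0 \<Longrightarrow> (\<Sum>d\<in>D. r ^ d * c d) = 0" and k: "k \<in> D"
  shows "c k = 0"
proof (rule ccontr)
  assume ck: "c k \<noteq> 0"
  define N where "N = Max D"
  define c' where "c' i = (if i \<in> D then c i else 0)" for i
  have DN: "D \<subseteq> {..N}" using D by (auto simp: N_def)
  have eq: "(\<Sum>i\<le>N. c' i * r ^ i) = (\<Sum>d\<in>D. r ^ d * c d)" for r :: real
  proof -
    have "(\<Sum>i\<le>N. c' i * r ^ i) = (\<Sum>i\<in>D. c' i * r ^ i)"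
      by (rule sum.mono_neutral_right) (use DN in \<open>auto simp: c'_def\<close>)
    then show ?thesis by (simp add: c'_def mult.commute)
  qed
  have "finite {r. (\<Sum>i\<le>N. c' i * r ^ i) = 0}"
    by (rule polyfun_roots_finite[of c' k]) (use ck k DN in \<open>auto simp: c'_def\<close>)
  moreover have "{0::real<..} \<subseteq> {r. (\<Sum>i\<le>N. c' i * r ^ i) = 0}"
    using zero eq by auto
  ultimately have "finite {0::real<..}" by (rule finite_subset[rotated])
  then show False using infinite_Ioi by blast
qed

lemma peval_restrict_wdeg_eq_zero:
  assumes "\<And>x. peval p x = 0"
  shows "peval (restrict_pm (\<lambda>a. wdeg w a = d) p) x = 0"
proof (cases "d \<in> wdeg w ` keys p")
  case True
  show ?thesis
    by (rule power_sum_eq_zero_imp_coeff_eq_zero[OF _ _ True,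
          where c = "\<lambda>d. peval (restrict_pm (\<lambda>a. wdeg w a = d) p) x"])
       (use assms peval_scale[of p _ w x, symmetric] in auto)
next
  case False
  then have "restrict_pm (\<lambda>a. wdeg w a = d) p = 0"
    by (intro poly_mapping_eqI) (force simp: lookup_restrict_pm in_keys_iff)
  then show ?thesis by (simp add: peval_def)
qed

text \<open>Weighting only the new variable \<open>i\<close> and comparing coefficients in \<open>r\<close> splits off the
  monomials by their exponent of \<open>i\<close>.\<close>
lemma peval_restrict_exponents_eq_zero:
  assumes "\<And>x. peval p x = 0" "finite S"
  shows "peval (restrict_pm (\<lambda>b. \<forall>i\<in>S. lookup b i = lookup a i) p) x = 0"
  using assms(2)
proof (induction S arbitrary: x)
  case empty
  then show ?case using assms(1) by (simp add: restrict_pm_True)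
next
  case (insert i S)
  let ?w = "\<lambda>k. if k = i then 1 else 0 :: nat"
  have w: "wdeg ?w b = lookup b i" for b
  proof -
    have "wdeg ?w b = (\<Sum>k\<in>UNIV. if k = i then lookup b k else 0)"
      unfolding wdeg_def by (rule sum.cong) auto
    then show ?thesis by simp
  qed
  have "peval (restrict_pm (\<lambda>b. wdeg ?w b = lookup a i)
          (restrict_pm (\<lambda>b. \<forall>i\<in>S. lookup b i = lookup a i) p)) x = 0"
    by (rule peval_restrict_wdeg_eq_zero) (use insert in auto)
  moreover have "restrict_pm (\<lambda>b. wdeg ?w b = lookup a i) (restrict_pm (\<lambda>b. \<forall>i\<in>S. lookup b i = lookup a i) p)
     = restrict_pm (\<lambda>b. \<forall>i\<in>insert i S. lookup b i = lookup a i) p"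
    unfolding restrict_pm_restrict_pm w by (rule arg_cong2[where f=restrict_pm]) auto
  ultimately show ?case by simp
qed

lemma peval_eq_zero_imp_eq_zero:
  fixes p :: "'n::finite rpoly"
  assumes "\<And>x. peval p x = 0"
  shows "p = 0"
proof (rule poly_mapping_eqI)
  fix a
  have "peval (restrict_pm (\<lambda>b. \<forall>i\<in>UNIV. lookup b i = lookup a i) p) (\<lambda>_. 1) = 0"
    by (rule peval_restrict_exponents_eq_zero[OF assms]) simp
  moreover have "restrict_pm (\<lambda>b. \<forall>i\<in>UNIV. lookup b i = lookup a i) p = restrict_pm (\<lambda>b. b = a) p"
    by (rule arg_cong2[where f=restrict_pm]) (auto simp: poly_mapping_eq_iff fun_eq_iff)
  moreover have "peval (restrict_pm (\<lambda>b. b = a) p) (\<lambda>_. 1) = lookup p a"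
    by (simp add: peval_restrict_pm mon_def sum.delta in_keys_iff if_distrib cong: if_cong)
  ultimately show "lookup p a = lookup 0 a" by simp
qed

lemma homogeneous_imp_is_hom:
  assumes "homogeneous f j"
  shows "is_hom f j"
proof -
  let ?D = "insert j (tdeg ` keys f)"
  have peval_hcomp_outside: "peval (hcomp d f) x = 0" if "d \<notin> tdeg ` keys f" for d x
  proof -
    have "hcomp d f = 0" by (rule hcomp_eq_zero) (use that in auto)
    then show ?thesis by (simp add: peval_def)
  qed
  have peval_hcomp: "peval (hcomp d f) x = 0" if "d \<noteq> j" for d x
  proof (cases "d \<in> tdeg ` keys f")
    case True
    define c where "c d = peval (hcomp d f) x - (if d = j then peval f x else 0)" for d
    have "c d = 0"
    proof (rule power_sum_eq_zero_imp_coeff_eq_zero[of ?D c])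
      fix r :: real assume "r > 0"
      then have "peval f (\<lambda>i. r * x i) = r ^ j * peval f x"
        using assms unfolding homogeneous_def by blast
      moreover have "(\<Sum>e\<in>?D. r ^ e * peval (hcomp e f) x) = peval f (\<lambda>i. r * x i)"
        by (cases "j \<in> tdeg ` keys f")
           (simp_all add: peval_scale_hcomp insert_absorb peval_hcomp_outside)
      ultimately show "(\<Sum>e\<in>?D. r ^ e * c e) = 0"
        by (simp add: c_def right_diff_distrib sum_subtractf if_distrib[where f="\<lambda>v. r ^ _ * v"]
            sum.delta cong: if_cong)
    qed (use True in auto)
    then show ?thesis using that by (simp add: c_def)
  qed (rule peval_hcomp_outside)
  show ?thesis
    unfolding is_hom_def
  proof
    fix a assume "a \<in> keys f"
    then have "lookup (hcomp (tdeg a) f) a \<noteq> 0" by (simp add: lookup_hcomp in_keys_iff)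
    with peval_hcomp peval_eq_zero_imp_eq_zero show "tdeg a = j" by fastforce
  qed
qed

section \<open>Finite dimension of the homogeneous spaces\<close>

lemma (in vector_space) linear_surj_on_imp_inj_on:
  assumes V: "subspace V" and VM: "V \<subseteq> span M" and M: "finite M"
    and add: "\<And>x y. f (x + y) = f x + f y" and scale: "\<And>c x. f (scale c x) = scale c (f x)"
    and surj: "V \<subseteq> f ` V"
  shows "inj_on f V"
proof -
  interpret h: module_hom scale scale f
    by unfold_locales (auto simp: add scale)
  have ker: "v = 0" if v: "v \<in> V" "f v = 0" for v
  proof (rule ccontr)
    assume v0: "v \<noteq> 0"
    have "{v} \<subseteq> V" "independent {v}" using v v0 by auto
    then obtain B where B: "{v} \<subseteq> B" "B \<subseteq> V" "independent B" "V \<subseteq> span B"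
      by (rule maximal_independent_subset_extend)
    have fin_B: "finite B" using independent_span_bound[OF M B(3)] B(2) VM by auto
    have "V \<subseteq> f ` span B" using surj B(4) by blast
    also have "\<dots> = span (f ` (B - {v}))"
    proof -
      have "f ` B = insert 0 (f ` (B - {v}))" using B(1) v by auto
      then show ?thesis by (simp add: h.span_image[symmetric])
    qed
    finally have "dim V \<le> card (f ` (B - {v}))" by (rule dim_le_card) (use fin_B in auto)
    also have "\<dots> \<le> card (B - {v})" by (rule card_image_le) (use fin_B in auto)
    also have "\<dots> < card B" by (rule card_Diff1_less) (use fin_B B(1) in auto)
    finally show False using basis_card_eq_dim[OF B(2,4,3)] by simp
  qed
  show ?thesis
  proof (rule inj_onI)
    fix x y assume xy: "x \<in> V" "y \<in> V" "f x = f y"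
    then have "x - y = 0" using ker[of "x - y"] V by (simp add: h.diff subspace_diff)
    then show "x = y" by simp
  qed
qed

lemma vector_space_pm_scale: "vector_space pm_scale"
  by unfold_locales (rule poly_mapping_eqI, simp add: lookup_pm_scale lookup_add algebra_simps)+

lemma finite_tdeg_eq: "finite {a::'n::finite \<Rightarrow>\<^sub>0 nat. tdeg a = k}"
proof -
  have "lookup ` {a::'n \<Rightarrow>\<^sub>0 nat. tdeg a = k} \<subseteq> Pi UNIV (\<lambda>_. {..k})"
  proof
    fix f assume "f \<in> lookup ` {a::'n \<Rightarrow>\<^sub>0 nat. tdeg a = k}"
    then obtain a where a: "tdeg a = k" "f = lookup a" by blast
    have "lookup a i \<le> k" for i unfolding a(1)[symmetric] tdeg_def by (rule member_le_sum) auto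
    then show "f \<in> Pi UNIV (\<lambda>_. {..k})" using a by auto
  qed
  moreover have "finite (Pi UNIV (\<lambda>_::'n. {..k}))"
    using finite_PiE[of "UNIV::'n set" "\<lambda>_. {..k}"] by (simp only: PiE_UNIV_domain finite_atMost finite)
  ultimately have "finite (lookup ` {a::'n \<Rightarrow>\<^sub>0 nat. tdeg a = k})" by (rule finite_subset)
  moreover have "inj_on lookup {a::'n \<Rightarrow>\<^sub>0 nat. tdeg a = k}"
    by (rule inj_onI) (metis poly_mapping_eqI)
  ultimately show ?thesis by (rule finite_imageD)
qed

lemma sum_monomials: "(\<Sum>a\<in>keys p. pm_scale (lookup p a) (Poly_Mapping.single a 1)) = p"
proof (rule poly_mapping_eqI)
  fix b
  have "lookup (\<Sum>a\<in>keys p. pm_scale (lookup p a) (Poly_Mapping.single a 1)) b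
      = (\<Sum>a\<in>keys p. if b = a then lookup p a else 0)"
    unfolding lookup_sum by (rule sum.cong) (auto simp: lookup_pm_scale lookup_single when_def)
  also have "\<dots> = lookup p b" by (simp add: sum.delta in_keys_iff)
  finally show "lookup (\<Sum>a\<in>keys p. pm_scale (lookup p a) (Poly_Mapping.single a 1)) b = lookup p b" .
qed

lemma surj_on_hom_space_imp_inj_on:
  fixes F :: "'n::finite rpoly \<Rightarrow> 'n rpoly"
  assumes add: "\<And>x y. F (x + y) = F x + F y" and scale: "\<And>c x. F (pm_scale c x) = pm_scale c (F x)"
    and surj: "hom_space k \<subseteq> F ` hom_space k"
  shows "inj_on F (hom_space k)"
proof -
  interpret V: vector_space "pm_scale :: real \<Rightarrow> 'n::finite rpoly \<Rightarrow> 'n rpoly"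
    by (rule vector_space_pm_scale)
  let ?M = "(\<lambda>a. Poly_Mapping.single a (1::real)) ` {a::'n \<Rightarrow>\<^sub>0 nat. tdeg a = k}"
  have "V.subspace (hom_space k)"
    unfolding V.subspace_def hom_space_def is_hom_def
    by (auto simp: in_keys_iff lookup_add lookup_pm_scale)
  moreover have "hom_space k \<subseteq> V.span ?M"
  proof
    fix q :: "'n rpoly" assume "q \<in> hom_space k"
    then show "q \<in> V.span ?M"
      by (subst sum_monomials[symmetric])
         (intro V.span_sum V.span_scale V.span_base, auto simp: hom_space_def is_hom_def)
  qed
  ultimately show ?thesis
    by (rule V.linear_surj_on_imp_inj_on[OF _ _ _ add scale surj]) (simp add: finite_tdeg_eq)
qed

section \<open>Fischer operators\<close>

lemma fischer_zero: "fischer f 0 = 0"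
  by (simp add: fischer_def laplacian_zero)

lemma fischer_add: "fischer f (p + q) = fischer f p + fischer f q"
  by (simp add: fischer_def distrib_left laplacian_add)

lemma fischer_diff: "fischer f (p - q) = fischer f p - fischer f q"
  using fischer_add[of f "p - q" q] by (simp add: algebra_simps)

lemma fischer_sum: "finite D \<Longrightarrow> fischer f (sum g D) = (\<Sum>d\<in>D. fischer f (g d))"
  by (induction D rule: finite_induct) (simp_all add: fischer_zero fischer_add)

lemma fischer_pm_scale: "fischer f (pm_scale c p) = pm_scale c (fischer f p)"
  by (simp add: fischer_def pm_scale_eq_mult laplacian_pm_scale[unfolded pm_scale_eq_mult, symmetric]
      mult.left_commute)

lemma hcomp_fischer_quadratic:
  assumes "is_hom \<phi> 2"
  shows "hcomp m (fischer \<phi> q) = fischer \<phi> (hcomp m q)"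
  using hcomp_mult_is_hom[OF assms, of m q] by (simp add: fischer_def hcomp_laplacian add.commute)

lemma hcomp_fischer_lowest:
  assumes \<phi>: "is_hom \<phi> 2" and R: "ord_ge R 3" and q: "ord_ge q m"
  shows "hcomp m (fischer (\<phi> + R) q) = fischer \<phi> (hcomp m q)"
proof -
  have "ord_ge (R * q) (3 + m)" by (rule ord_ge_mult[OF R q])
  then have "hcomp (m + 2) (R * q) = 0"
    by (intro hcomp_eq_zero) (auto simp: ord_ge_def)
  moreover have "hcomp (m + 2) (\<phi> * q) = \<phi> * hcomp m q"
    using hcomp_mult_is_hom[OF \<phi>, of m q] by (simp add: add.commute)
  ultimately show ?thesis
    by (simp add: fischer_def hcomp_laplacian distrib_right hcomp_add)
qed

lemma ord_ge_fischer_preimage: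
  assumes \<phi>: "is_hom \<phi> 2" and R: "ord_ge R 3"
    and inj: "\<And>j. j < k \<Longrightarrow> inj_on (fischer \<phi>) (hom_space j)"
    and f: "is_hom (fischer (\<phi> + R) q) k"
  shows "ord_ge q k"
proof -
  have "ord_ge q j" if "j \<le> k" for j
    using that
  proof (induction j)
    case 0
    then show ?case by (simp add: ord_ge_def)
  next
    case (Suc j)
    then have q: "ord_ge q j" and jk: "j < k" by auto
    have "hcomp j (fischer (\<phi> + R) q) = 0"
      by (rule hcomp_eq_zero) (use f jk in \<open>auto simp: is_hom_def\<close>)
    then have "fischer \<phi> (hcomp j q) = fischer \<phi> 0"
      by (simp add: hcomp_fischer_lowest[OF \<phi> R q] fischer_zero)
    moreover have "0 \<in> hom_space j" by (simp add: hom_space_def is_hom_def)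
    ultimately have "hcomp j q = 0"
      using inj[OF jk] hcomp_in_hom_space by (meson inj_onD)
    then show ?case by (rule ord_ge_SucI[OF q])
  qed
  then show ?thesis by simp
qed

lemma bij_betw_fischer_hom_space:
  fixes \<phi> :: "'n::finite rpoly"
  assumes \<phi>: "is_hom \<phi> 2" and R: "ord_ge R 3" and surj: "surj (fischer (\<phi> + R))"
  shows "bij_betw (fischer \<phi>) (hom_space k) (hom_space k)"
proof (induction k rule: less_induct)
  case (less k)
  have onto: "hom_space k \<subseteq> fischer \<phi> ` hom_space k"
  proof
    fix f :: "'n rpoly" assume "f \<in> hom_space k"
    then have f: "is_hom f k" by (simp add: hom_space_def)
    obtain q where q: "fischer (\<phi> + R) q = f" using surj by (metis surjD)
    have "ord_ge q k"
      by (rule ord_ge_fischer_preimage[OF \<phi> R]) (use less.IH q f in \<open>auto dest: bij_betw_imp_inj_on\<close>)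
    then have "f = fischer \<phi> (hcomp k q)"
      using hcomp_fischer_lowest[OF \<phi> R, of q k] q hcomp_eq_self[OF f] by simp
    then show "f \<in> fischer \<phi> ` hom_space k" using hcomp_in_hom_space by blast
  qed
  moreover have "fischer \<phi> ` hom_space k \<subseteq> hom_space k"
    using hcomp_fischer_quadratic[OF \<phi>] hcomp_eq_self
    by (metis (no_types, lifting) hom_space_def image_subsetI is_hom_hcomp mem_Collect_eq)
  moreover have "inj_on (fischer \<phi>) (hom_space k)"
    by (rule surj_on_hom_space_imp_inj_on[OF fischer_add fischer_pm_scale onto])
  ultimately show ?case by (simp add: bij_betw_def)
qed

lemma bij_fischer_if_bij_betw_hom_spaces:
  fixes \<phi> :: "'n::finite rpoly"
  assumes \<phi>: "is_hom \<phi> 2" and bij: "\<And>k. bij_betw (fischer \<phi>) (hom_space k) (hom_space k)"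
  shows "bij (fischer \<phi>)"
  unfolding bij_def
proof
  show "inj (fischer \<phi>)"
  proof (rule injI)
    fix x y assume xy: "fischer \<phi> x = fischer \<phi> y"
    show "x = y"
    proof (rule poly_mapping_eqI)
      fix a :: "'n \<Rightarrow>\<^sub>0 nat"
      have "fischer \<phi> (hcomp (tdeg a) x) = fischer \<phi> (hcomp (tdeg a) y)"
        using hcomp_fischer_quadratic[OF \<phi>] xy by metis
      then have "hcomp (tdeg a) x = hcomp (tdeg a) y"
        using bij_betw_imp_inj_on[OF bij] hcomp_in_hom_space by (meson inj_onD)
      then show "lookup x a = lookup y a" by (metis lookup_hcomp)
    qed
  qed
  show "surj (fischer \<phi>)"
  unfolding surj_def
  proof
    fix f
    have "\<exists>h. hcomp d f = fischer \<phi> h" for d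
      using bij[of d] hcomp_in_hom_space by (metis bij_betw_def imageE)
    then obtain g where g: "\<And>d. hcomp d f = fischer \<phi> (g d)" by metis
    have "f = (\<Sum>d\<in>tdeg ` keys f. hcomp d f)" by (simp add: sum_hcomp)
    also have "\<dots> = fischer \<phi> (\<Sum>d\<in>tdeg ` keys f. g d)" by (simp add: fischer_sum g)
    finally show "\<exists>q. f = fischer \<phi> q" ..
  qed
qed

lemma inj_fischer_perturbation:
  assumes \<phi>: "is_hom \<phi> 2" and R: "ord_ge R 3" and inj: "inj (fischer \<phi>)"
  shows "inj (fischer (\<phi> + R))"
proof (rule injI, rule ccontr)
  fix x y assume xy: "fischer (\<phi> + R) x = fischer (\<phi> + R) y" "x \<noteq> y"
  define q where "q = x - y"
  define m where "m = Min (tdeg ` keys q)"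
  have "keys q \<noteq> {}" using xy(2) by (simp add: q_def)
  then have "m \<in> tdeg ` keys q" unfolding m_def by (intro Min_in) auto
  then obtain a where a: "a \<in> keys q" "tdeg a = m" by blast
  have "ord_ge q m" by (auto simp: ord_ge_def m_def)
  then have "fischer \<phi> (hcomp m q) = hcomp m (fischer (\<phi> + R) q)"
    by (simp add: hcomp_fischer_lowest[OF \<phi> R])
  also have "\<dots> = fischer \<phi> 0"
    using xy(1) by (simp add: q_def fischer_diff fischer_zero)
  finally have "hcomp m q = 0" using inj by (meson injD)
  then show False using a by (metis lookup_hcomp lookup_zero in_keys_iff)
qed

lemma ord_ge_sum_homogeneous:
  assumes "\<And>j. j \<in> J \<Longrightarrow> homogeneous (\<psi>s j) j \<and> d \<le> j"
  shows "ord_ge (\<Sum>j\<in>J. \<psi>s j) d"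
  unfolding ord_ge_def
proof
  fix a assume "a \<in> keys (\<Sum>j\<in>J. \<psi>s j)"
  then obtain j where "j \<in> J" "a \<in> keys (\<psi>s j)" using keys_sum[of \<psi>s J] by blast
  with assms homogeneous_imp_is_hom show "d \<le> tdeg a" by (fastforce simp: is_hom_def)
qed

theorem mainTheorem6:
  fixes \<psi> :: "'n::finite rpoly" and \<psi>s :: "nat \<Rightarrow> 'n rpoly" and t :: nat
  assumes "zero_multiplicity \<psi> (\<lambda>i. 0) 2"
    and "\<psi> = (\<Sum>j=2..t. \<psi>s j)"
    and "\<And>j. 2 \<le> j \<Longrightarrow> j \<le> t \<Longrightarrow> homogeneous (\<psi>s j) j"
    and "\<psi>s 2 \<noteq> 0" and "\<psi>s t \<noteq> 0"
    and "surj (fischer \<psi>)"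
  shows "bij (fischer (\<psi>s 2)) \<and> bij (fischer \<psi>)"
proof -
  define R where "R = (\<Sum>j=3..t. \<psi>s j)"
  have "2 \<le> t"
  proof (rule ccontr)
    assume "\<not> 2 \<le> t"
    then have "range (fischer \<psi>) = {0}" using assms(2) by (auto simp: fischer_def laplacian_zero)
    then show False using assms(6) by (metis singletonD zero_neq_one UNIV_I)
  qed
  then have \<psi>: "\<psi> = \<psi>s 2 + R"
    using assms(2) by (simp add: R_def sum.atLeast_Suc_atMost numeral_3_eq_3)
  have \<phi>: "is_hom (\<psi>s 2) 2" using \<open>2 \<le> t\<close> assms(3) by (simp add: homogeneous_imp_is_hom)
  have R: "ord_ge R 3" unfolding R_def by (rule ord_ge_sum_homogeneous) (simp add: assms(3))
  have "bij (fischer (\<psi>s 2))"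
    using bij_betw_fischer_hom_space[OF \<phi> R] assms(6) \<psi> bij_fischer_if_bij_betw_hom_spaces[OF \<phi>]
    by simp
  moreover have "inj (fischer \<psi>)"
    using inj_fischer_perturbation[OF \<phi> R] calculation \<psi> by (simp add: bij_is_inj)
  ultimately show ?thesis using assms(6) by (simp add: bij_def)
qed

end
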